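(* Let $G$ be a connected graph on vertex set $[n]$ and $\pi$ a permutation of $[n]$ with $rt(G,\pi)>1$. Then $rt(G,\pi)=2$ if and only if the graph $G_{cycle(\pi)}$ has a perfect matching, where a perfect matching is allowed to cover a vertex by a self-loop at that vertex.
   Context: Routing via matchings: each vertex $i$ of $G$ initially holds a pebble which must be moved to vertex $\pi(i)$. A step consists of choosing a matching of $G$ and swapping the pebbles at the endpoints of every matched edge. $rt(G,\pi)$ is the minimum number of steps needed to route all pebbles to their destinations. A cycle of $\pi$ is identified with its vertex set. A cycle $C$ is individually routable (in 2 steps) if its pebbles can be routed to their destinations in at most 2 steps using only edges of the induced subgraph $G[C]$. Two cycles $C_1,C_2$ are mutually routable in 2 steps if the pebbles on $C_1\cup C_2$ can be routed to their destinations in at most 2 steps using only edges of $G$ with one endpoint in $C_1$ and the other in $C_2$. $G_{cycle(\pi)}$ is the graph whose vertices are the cycles of $\pi$, in which two distinct cycles are adjacent iff they are mutually routable in 2 steps, and which has a self-loop at each cycle that is individually routable. *)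

theory Defs
  imports "HOL-Combinatorics.Permutations"
begin

definition graph_on :: "nat \<Rightarrow> nat set set \<Rightarrow> bool" where
  "graph_on n E \<longleftrightarrow> (\<forall>e\<in>E. card e = 2 \<and> e \<subseteq> {..<n})"

definition connected_graph :: "nat \<Rightarrow> nat set set \<Rightarrow> bool" where
  "connected_graph n E \<longleftrightarrow>
     (\<forall>u<n. \<forall>v<n. (\<lambda>x y. {x, y} \<in> E)\<^sup>*\<^sup>* u v)"

definition matching :: "nat set set \<Rightarrow> nat set set \<Rightarrow> bool" where
  "matching E M \<longleftrightarrow> M \<subseteq> E \<and> (\<forall>e1\<in>M. \<forall>e2\<in>M. e1 \<noteq> e2 \<longrightarrow> e1 \<inter> e2 = {})"

text \<open>The movement of pebbles effected by one step with matching M: the pebble at v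
  goes to the other endpoint of the matched edge at v (if any).\<close>
definition swap_of :: "nat set set \<Rightarrow> nat \<Rightarrow> nat" where
  "swap_of M v = (if \<exists>u. u \<noteq> v \<and> {v, u} \<in> M then (THE u. u \<noteq> v \<and> {v, u} \<in> M) else v)"

text \<open>Position of the pebble that started at i after performing the steps in the list.\<close>
definition route :: "nat set set list \<Rightarrow> nat \<Rightarrow> nat" where
  "route ms = fold (\<lambda>M f. swap_of M \<circ> f) ms id"

definition rt :: "nat \<Rightarrow> nat set set \<Rightarrow> (nat \<Rightarrow> nat) \<Rightarrow> nat" where
  "rt n E \<pi> = (LEAST k. \<exists>ms. length ms = k \<and> (\<forall>M\<in>set ms. matching E M)
                              \<and> (\<forall>i<n. route ms i = \<pi> i))"

text \<open>Cycles of \<pi>, identified with their vertex sets (fixed points give 1-cycles).\<close>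
definition cycles_of :: "nat \<Rightarrow> (nat \<Rightarrow> nat) \<Rightarrow> nat set set" where
  "cycles_of n \<pi> = {{(\<pi> ^^ k) i | k. True} | i. i < n}"

definition indiv_routable :: "nat set set \<Rightarrow> (nat \<Rightarrow> nat) \<Rightarrow> nat set \<Rightarrow> bool" where
  "indiv_routable E \<pi> C \<longleftrightarrow>
     (\<exists>ms. length ms \<le> 2 \<and> (\<forall>M\<in>set ms. matching {e\<in>E. e \<subseteq> C} M)
           \<and> (\<forall>i\<in>C. route ms i = \<pi> i))"

definition mutually_routable :: "nat set set \<Rightarrow> (nat \<Rightarrow> nat) \<Rightarrow> nat set \<Rightarrow> nat set \<Rightarrow> bool" where
  "mutually_routable E \<pi> C1 C2 \<longleftrightarrow>
     (\<exists>ms. length ms \<le> 2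
           \<and> (\<forall>M\<in>set ms. matching {e\<in>E. \<exists>a\<in>C1. \<exists>b\<in>C2. e = {a, b}} M)
           \<and> (\<forall>i\<in>C1 \<union> C2. route ms i = \<pi> i))"

definition perfect_matching_loops ::
  "'a set \<Rightarrow> ('a \<Rightarrow> 'a \<Rightarrow> bool) \<Rightarrow> ('a \<Rightarrow> bool) \<Rightarrow> bool" where
  "perfect_matching_loops V adj loop \<longleftrightarrow>
     (\<exists>M. M \<subseteq> {{a, b} | a b. a \<in> V \<and> b \<in> V \<and> a \<noteq> b \<and> adj a b} \<union> {{a} | a. a \<in> V \<and> loop a}
          \<and> (\<forall>v\<in>V. \<exists>!e. e \<in> M \<and> v \<in> e))"

end

theory Submission
  imports Defs "HOL-Combinatorics.Orbits"
begin

text \<open>A routing in two steps is a pair of matchings \<open>A, B\<close>, i.e.\ of involutions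
  \<open>s = swap_of A\<close> and \<open>t = swap_of B\<close> with \<open>\<pi> = t \<circ> s\<close>. Then \<open>s \<circ> \<pi> \<circ> s = s \<circ> t = \<pi>\<inverse>\<close>,
  so \<open>s\<close> maps every cycle of \<open>\<pi>\<close> onto a cycle of \<open>\<pi>\<close>, and \<open>C \<mapsto> s ` C\<close> is an involution
  on the cycles. Restricting \<open>A\<close> and \<open>B\<close> to the edges between \<open>C\<close> and \<open>s ` C\<close> routes
  these two cycles mutually (individually if \<open>s ` C = C\<close>), so the pairs \<open>{C, s ` C}\<close> form
  a perfect matching of \<open>G_{cycle(\<pi>)}\<close>. Conversely, the two-step routings of the parts of
  such a perfect matching live on pairwise disjoint vertex sets, so their matchings can be
  united into two matchings of \<open>G\<close> routing \<open>\<pi>\<close>. Connectivity is needed only to know that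
  \<open>\<pi>\<close> can be routed at all, so that \<open>rt\<close> is attained.\<close>

lemma matching_disjoint:
  "matching F M \<Longrightarrow> e1 \<in> M \<Longrightarrow> e2 \<in> M \<Longrightarrow> e1 \<noteq> e2 \<Longrightarrow> e1 \<inter> e2 = {}"
  unfolding matching_def by blast

lemma matching_mono: "matching F M \<Longrightarrow> F \<subseteq> F' \<Longrightarrow> matching F' M"
  unfolding matching_def by blast

lemma matching_filter: "matching F M \<Longrightarrow> matching {e\<in>F. P e} {e\<in>M. P e}"
  unfolding matching_def by blast

lemma swap_of_cong:
  assumes "\<And>u. u \<noteq> v \<Longrightarrow> {v, u} \<in> M \<longleftrightarrow> {v, u} \<in> M'"
  shows "swap_of M v = swap_of M' v"
proof -
  have "(\<lambda>u. u \<noteq> v \<and> {v, u} \<in> M) = (\<lambda>u. u \<noteq> v \<and> {v, u} \<in> M')"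
    using assms by blast
  then show ?thesis
    unfolding swap_of_def by (simp only:)
qed

lemma swap_of_edge:
  assumes "matching F M" "{v, u} \<in> M" "u \<noteq> v"
  shows "swap_of M v = u"
proof -
  have "w = u" if "w \<noteq> v" "{v, w} \<in> M" for w
    using matching_disjoint[OF assms(1) that(2) assms(2)] that(1) by (auto simp: doubleton_eq_iff)
  then have "(THE w. w \<noteq> v \<and> {v, w} \<in> M) = u"
    using assms(2,3) by blast
  then show ?thesis
    using assms(2,3) unfolding swap_of_def by auto
qed

lemma swap_of_unmatched: "(\<And>u. u \<noteq> v \<Longrightarrow> {v, u} \<notin> M) \<Longrightarrow> swap_of M v = v"
  unfolding swap_of_def by auto

lemma swap_of_moved_edge:
  assumes "matching F M" "swap_of M v \<noteq> v"
  shows "{v, swap_of M v} \<in> M"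
proof -
  obtain u where "u \<noteq> v" "{v, u} \<in> M"
    using assms(2) swap_of_unmatched by blast
  then show ?thesis
    using swap_of_edge[OF assms(1)] by simp
qed

lemma swap_of_swap_of:
  assumes "matching F M"
  shows "swap_of M (swap_of M v) = v"
proof (cases "swap_of M v = v")
  case False
  then have "{swap_of M v, v} \<in> M"
    using swap_of_moved_edge[OF assms] by (simp add: insert_commute)
  then show ?thesis
    using swap_of_edge[OF assms] False by simp
qed simp

lemma swap_of_permutes:
  assumes "graph_on n E" "matching E M"
  shows "swap_of M permutes {..<n}"
proof -
  have "swap_of M v = v" if "v \<notin> {..<n}" for v
  proof (rule ccontr)
    assume "swap_of M v \<noteq> v"
    then have "{v, swap_of M v} \<in> E"
      using swap_of_moved_edge[OF assms(2)] assms(2) unfolding matching_def by blast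
    then show False
      using assms(1) that unfolding graph_on_def by blast
  qed
  moreover have "\<exists>!u. swap_of M u = v" for v
    by (metis swap_of_swap_of[OF assms(2)])
  ultimately show ?thesis
    unfolding permutes_def by blast
qed

lemma swap_of_in_set:
  assumes "matching F M" "\<And>e. e \<in> F \<Longrightarrow> e \<subseteq> S" "v \<in> S"
  shows "swap_of M v \<in> S"
  using swap_of_moved_edge[OF assms(1)] assms unfolding matching_def
  by (cases "swap_of M v = v") auto

lemma swap_of_filter:
  assumes "matching F M" "swap_of M v \<noteq> v \<Longrightarrow> P {v, swap_of M v}"
  shows "swap_of {e\<in>M. P e} v = swap_of M v"
proof (rule swap_of_cong)
  fix u assume "u \<noteq> v"
  then show "{v, u} \<in> {e\<in>M. P e} \<longleftrightarrow> {v, u} \<in> M"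
    using assms swap_of_edge[OF assms(1)] by auto
qed

lemma swap_of_transpose:
  assumes "a \<noteq> b"
  shows "swap_of {{a, b}} = Transposition.transpose a b"
proof
  fix x
  have M: "matching {{a, b}} {{a, b}}"
    unfolding matching_def by simp
  have "swap_of {{a, b}} a = b" "swap_of {{a, b}} b = a"
    using swap_of_edge[OF M, of a b] swap_of_edge[OF M, of b a] assms
    by (simp_all add: insert_commute)
  moreover have "swap_of {{a, b}} x = x" if "x \<noteq> a" "x \<noteq> b"
    using that by (intro swap_of_unmatched) (auto simp: doubleton_eq_iff)
  ultimately show "swap_of {{a, b}} x = Transposition.transpose a b x"
    by (cases "x = a \<or> x = b") auto
qed

lemma route_append: "route (xs @ ys) = route ys \<circ> route xs"
proof (induction ys rule: rev_induct)
  case (snoc y ys)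
  then show ?case
    by (simp add: route_def comp_assoc)
qed (simp add: route_def)

lemma route_transpose_of_walk:
  assumes "graph_on n E" "(\<lambda>x y. {x, y} \<in> E)\<^sup>*\<^sup>* a b"
  shows "\<exists>ms. (\<forall>M\<in>set ms. matching E M) \<and> route ms = Transposition.transpose a b"
  using assms(2)
proof (induction rule: rtranclp_induct)
  case base
  show ?case
    by (intro exI[of _ "[]"]) (simp add: route_def)
next
  case (step c b)
  obtain ms where ms: "\<forall>M\<in>set ms. matching E M" "route ms = Transposition.transpose a c"
    using step.IH by blast
  have "c \<noteq> b"
    using step.hyps(2) assms(1) unfolding graph_on_def by fastforce
  have cb: "matching E {{c, b}}" "route [{{c, b}}] = Transposition.transpose c b"
    using step.hyps(2) \<open>c \<noteq> b\<close> by (simp_all add: matching_def route_def swap_of_transpose)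
  consider "a = b" | "a = c" | "a \<noteq> b" "a \<noteq> c"
    by blast
  then show ?case
  proof cases
    case 1
    then show ?thesis
      by (intro exI[of _ "[]"]) (simp add: route_def)
  next
    case 2
    then show ?thesis
      using cb by (intro exI[of _ "[{{c, b}}]"]) simp
  next
    case 3
    have "route ([{{c, b}}] @ ms @ [{{c, b}}])
        = Transposition.transpose c b \<circ> Transposition.transpose a c \<circ> Transposition.transpose c b"
      by (simp only: route_append cb ms comp_assoc)
    also have "\<dots> = Transposition.transpose a b"
      using 3 \<open>c \<noteq> b\<close> by (simp add: fun_eq_iff transpose_def)
    finally show ?thesis
      using ms cb by (intro exI[of _ "[{{c, b}}] @ ms @ [{{c, b}}]"]) auto
  qed
qed

lemma permutes_routable:
  assumes "graph_on n E" "connected_graph n E" "p permutes {..<n}"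
  shows "\<exists>ms. (\<forall>M\<in>set ms. matching E M) \<and> route ms = p"
  using assms(3) finite_lessThan
proof (induction rule: permutes_induct)
  case id
  show ?case
    by (intro exI[of _ "[]"]) (simp add: route_def)
next
  case (swap a b p)
  obtain ms where "\<forall>M\<in>set ms. matching E M" "route ms = p"
    using swap.IH by blast
  moreover obtain ts where "\<forall>M\<in>set ts. matching E M" "route ts = Transposition.transpose a b"
    using route_transpose_of_walk[OF assms(1)] assms(2) swap.hyps(1,2)
    unfolding connected_graph_def by blast
  ultimately show ?case
    by (intro exI[of _ "ms @ ts"]) (auto simp: route_append)
qed

definition routable_in_two :: "nat set set \<Rightarrow> (nat \<Rightarrow> nat) \<Rightarrow> nat set \<Rightarrow> bool" where
  "routable_in_two F \<pi> S \<longleftrightarrow>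
     (\<exists>A B. matching F A \<and> matching F B \<and> (\<forall>i\<in>S. swap_of B (swap_of A i) = \<pi> i))"

lemma routable_in_two_iff_route:
  "routable_in_two F \<pi> S \<longleftrightarrow>
     (\<exists>ms. length ms \<le> 2 \<and> (\<forall>M\<in>set ms. matching F M) \<and> (\<forall>i\<in>S. route ms i = \<pi> i))"
proof
  assume "routable_in_two F \<pi> S"
  then obtain A B where "matching F A" "matching F B" "\<forall>i\<in>S. swap_of B (swap_of A i) = \<pi> i"
    unfolding routable_in_two_def by blast
  then show "\<exists>ms. length ms \<le> 2 \<and> (\<forall>M\<in>set ms. matching F M) \<and> (\<forall>i\<in>S. route ms i = \<pi> i)"
    by (intro exI[of _ "[A, B]"]) (simp add: route_def)
next
  assume "\<exists>ms. length ms \<le> 2 \<and> (\<forall>M\<in>set ms. matching F M) \<and> (\<forall>i\<in>S. route ms i = \<pi> i)"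
  then obtain ms where ms: "length ms \<le> 2" "\<forall>M\<in>set ms. matching F M" "\<forall>i\<in>S. route ms i = \<pi> i"
    by blast
  \<comment> \<open>pad with empty matchings, which act as the identity\<close>
  have empty: "matching F {}" "swap_of {} = id"
    by (auto simp: matching_def swap_of_def)
  have "ms = [] \<or> (\<exists>A. ms = [A]) \<or> (\<exists>A B. ms = [A, B])"
    using ms(1) by (auto simp: le_Suc_eq numeral_2_eq_2 length_Suc_conv)
  then show "routable_in_two F \<pi> S"
    using ms(2,3) empty unfolding routable_in_two_def
    by (elim disjE exE) (fastforce simp: route_def)+
qed

lemma routable_in_two_mono:
  "routable_in_two F \<pi> S \<Longrightarrow> F \<subseteq> F' \<Longrightarrow> S' \<subseteq> S \<Longrightarrow> routable_in_two F' \<pi> S'"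
  unfolding routable_in_two_def by (meson matching_mono subsetD)

lemma indiv_routable_iff: "indiv_routable E \<pi> C \<longleftrightarrow> routable_in_two {e\<in>E. e \<subseteq> C} \<pi> C"
  unfolding indiv_routable_def routable_in_two_iff_route ..

lemma mutually_routable_iff:
  "mutually_routable E \<pi> C D \<longleftrightarrow>
     routable_in_two {e\<in>E. \<exists>a\<in>C. \<exists>b\<in>D. e = {a, b}} \<pi> (C \<union> D)"
  unfolding mutually_routable_def routable_in_two_iff_route ..

lemma mutually_routable_self_imp_indiv_routable:
  "mutually_routable E \<pi> C C \<Longrightarrow> indiv_routable E \<pi> C"
  unfolding mutually_routable_iff indiv_routable_iff
  by (erule routable_in_two_mono) auto

lemma rt_le_2_iff:
  assumes "\<exists>ms. (\<forall>M\<in>set ms. matching E M) \<and> (\<forall>i<n. route ms i = \<pi> i)"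
  shows "rt n E \<pi> \<le> 2 \<longleftrightarrow> routable_in_two E \<pi> {..<n}"
proof
  assume "rt n E \<pi> \<le> 2"
  have "\<exists>ms. length ms = rt n E \<pi> \<and> (\<forall>M\<in>set ms. matching E M) \<and> (\<forall>i<n. route ms i = \<pi> i)"
    unfolding rt_def by (rule LeastI_ex) (use assms in blast)
  then obtain ms where "length ms = rt n E \<pi>" "\<forall>M\<in>set ms. matching E M" "\<forall>i<n. route ms i = \<pi> i"
    by blast
  then show "routable_in_two E \<pi> {..<n}"
    unfolding routable_in_two_iff_route using \<open>rt n E \<pi> \<le> 2\<close> by (intro exI[of _ ms]) auto
next
  assume "routable_in_two E \<pi> {..<n}"
  then obtain ms where "length ms \<le> 2" "\<forall>M\<in>set ms. matching E M" "\<forall>i<n. route ms i = \<pi> i"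
    unfolding routable_in_two_iff_route by auto
  moreover have "rt n E \<pi> \<le> length ms"
    unfolding rt_def by (rule Least_le) (use calculation in blast)
  ultimately show "rt n E \<pi> \<le> 2"
    by linarith
qed

lemma routable_in_two_filter_edges:
  assumes "matching F A" "matching F B"
    and "\<And>i. i \<in> S \<Longrightarrow> swap_of B (swap_of A i) = \<pi> i"
    and "\<And>i. i \<in> S \<Longrightarrow> swap_of A i \<noteq> i \<Longrightarrow> P {i, swap_of A i}"
    and "\<And>i. i \<in> S \<Longrightarrow> \<pi> i \<noteq> swap_of A i \<Longrightarrow> P {swap_of A i, \<pi> i}"
  shows "routable_in_two {e\<in>F. P e} \<pi> S"
  unfolding routable_in_two_def
proof (intro exI conjI ballI)
  show "matching {e\<in>F. P e} {e\<in>A. P e}" "matching {e\<in>F. P e} {e\<in>B. P e}"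
    using assms(1,2) by (simp_all add: matching_filter)
  fix i assume "i \<in> S"
  have "swap_of {e\<in>A. P e} i = swap_of A i"
    by (rule swap_of_filter[where P = P, OF assms(1) assms(4)[OF \<open>i \<in> S\<close>]])
  moreover have "swap_of {e\<in>B. P e} (swap_of A i) = swap_of B (swap_of A i)"
    by (rule swap_of_filter[OF assms(2)]) (use assms(3,5) \<open>i \<in> S\<close> in auto)
  ultimately show "swap_of {e\<in>B. P e} (swap_of {e\<in>A. P e} i) = \<pi> i"
    using assms(3) \<open>i \<in> S\<close> by simp
qed

lemma matching_disjoint_Union:
  assumes "disjoint \<P>" "\<And>S. S \<in> \<P> \<Longrightarrow> matching {e\<in>E. e \<subseteq> S} (X S)"
  shows "matching E (\<Union>S\<in>\<P>. X S)"
  unfolding matching_def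
proof (intro conjI ballI impI)
  have sub: "e \<in> E" "e \<subseteq> S" if "S \<in> \<P>" "e \<in> X S" for S e
    using assms(2)[OF that(1)] that(2) unfolding matching_def by blast+
  then show "(\<Union>S\<in>\<P>. X S) \<subseteq> E"
    by blast
  fix e1 e2 assume "e1 \<in> (\<Union>S\<in>\<P>. X S)" "e2 \<in> (\<Union>S\<in>\<P>. X S)" "e1 \<noteq> e2"
  then obtain S1 S2 where S: "S1 \<in> \<P>" "e1 \<in> X S1" "S2 \<in> \<P>" "e2 \<in> X S2"
    by blast
  show "e1 \<inter> e2 = {}"
  proof (cases "S1 = S2")
    case True
    then show ?thesis
      using matching_disjoint[OF assms(2)[OF S(1)] S(2)] S(4) \<open>e1 \<noteq> e2\<close> by blast
  next
    case False
    then have "S1 \<inter> S2 = {}"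
      using assms(1) S(1,3) unfolding pairwise_def disjnt_def by blast
    then show ?thesis
      using sub(2)[OF S(1,2)] sub(2)[OF S(3,4)] by blast
  qed
qed

lemma swap_of_disjoint_Union:
  assumes "disjoint \<P>" "\<And>S. S \<in> \<P> \<Longrightarrow> matching {e\<in>E. e \<subseteq> S} (X S)" "S \<in> \<P>" "i \<in> S"
  shows "swap_of (\<Union>S\<in>\<P>. X S) i = swap_of (X S) i"
proof (rule swap_of_cong)
  fix u
  have "S' = S" if "S' \<in> \<P>" "{i, u} \<in> X S'" for S'
  proof -
    have "i \<in> S'"
      using assms(2)[OF that(1)] that(2) unfolding matching_def by blast
    then show ?thesis
      using assms(1,3,4) that(1) unfolding pairwise_def disjnt_def by blast
  qed
  then show "{i, u} \<in> (\<Union>S\<in>\<P>. X S) \<longleftrightarrow> {i, u} \<in> X S"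
    using assms(3) by blast
qed

lemma routable_in_two_disjoint_Union:
  assumes "disjoint \<P>"
    and "\<And>S. S \<in> \<P> \<Longrightarrow> routable_in_two {e\<in>E. e \<subseteq> S} \<pi> S"
  shows "routable_in_two E \<pi> (\<Union>\<P>)"
proof -
  have "\<forall>S\<in>\<P>. \<exists>A B. matching {e\<in>E. e \<subseteq> S} A \<and> matching {e\<in>E. e \<subseteq> S} B
          \<and> (\<forall>i\<in>S. swap_of B (swap_of A i) = \<pi> i)"
    using assms(2) unfolding routable_in_two_def by blast
  then obtain A where "\<forall>S\<in>\<P>. \<exists>B. matching {e\<in>E. e \<subseteq> S} (A S) \<and> matching {e\<in>E. e \<subseteq> S} B
          \<and> (\<forall>i\<in>S. swap_of B (swap_of (A S) i) = \<pi> i)"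
    by (rule bchoice[THEN exE])
  then obtain B where "\<forall>S\<in>\<P>. matching {e\<in>E. e \<subseteq> S} (A S) \<and> matching {e\<in>E. e \<subseteq> S} (B S)
          \<and> (\<forall>i\<in>S. swap_of (B S) (swap_of (A S) i) = \<pi> i)"
    by (rule bchoice[THEN exE])
  then have A: "\<And>S. S \<in> \<P> \<Longrightarrow> matching {e\<in>E. e \<subseteq> S} (A S)"
    and B: "\<And>S. S \<in> \<P> \<Longrightarrow> matching {e\<in>E. e \<subseteq> S} (B S)"
    and AB: "\<And>S i. S \<in> \<P> \<Longrightarrow> i \<in> S \<Longrightarrow> swap_of (B S) (swap_of (A S) i) = \<pi> i"
    by blast+
  show ?thesis
    unfolding routable_in_two_def
  proof (intro exI conjI ballI)
    show "matching E (\<Union>S\<in>\<P>. A S)" "matching E (\<Union>S\<in>\<P>. B S)"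
      using matching_disjoint_Union[OF assms(1)] A B by blast+
    fix i assume "i \<in> \<Union>\<P>"
    then obtain S where S: "S \<in> \<P>" "i \<in> S"
      by blast
    have "swap_of (A S) i \<in> S"
      using swap_of_in_set[OF A[OF S(1)]] S(2) by blast
    then show "swap_of (\<Union>S\<in>\<P>. B S) (swap_of (\<Union>S\<in>\<P>. A S) i) = \<pi> i"
      using swap_of_disjoint_Union[OF assms(1) A S] swap_of_disjoint_Union[OF assms(1) B S(1)]
        AB[OF S] by simp
  qed
qed

lemma cycles_of_eq_orbits:
  assumes "\<pi> permutes {..<n}"
  shows "cycles_of n \<pi> = orbit \<pi> ` {..<n}"
  using permutes_imp_permutation[OF finite_lessThan assms]
  unfolding cycles_of_def by (auto simp: orbit_altdef_permutation)

lemma cycle_eq_orbit: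
  assumes "\<pi> permutes {..<n}" "C \<in> cycles_of n \<pi>" "i \<in> C"
  shows "C = orbit \<pi> i"
proof -
  obtain x where "C = orbit \<pi> x"
    using assms(2) by (auto simp: cycles_of_eq_orbits[OF assms(1)])
  then show ?thesis
    using orbit_cyclic_eq3[OF cyclic_on_orbit[OF assms(1) finite_lessThan]] assms(3) by simp
qed

lemma cycle_closed:
  assumes "\<pi> permutes {..<n}" "C \<in> cycles_of n \<pi>" "i \<in> C"
  shows "\<pi> i \<in> C"
  using cycle_eq_orbit[OF assms] orbit.base[of \<pi> i] by simp

lemma orbit_in_cycles_of:
  assumes "\<pi> permutes {..<n}" "i < n"
  shows "orbit \<pi> i \<in> cycles_of n \<pi>"
  using assms by (auto simp: cycles_of_eq_orbits)

lemma involution_image_orbit: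
  assumes "permutation \<pi>" "\<pi> = t \<circ> s" "\<And>x. s (s x) = x" "\<And>x. t (t x) = x"
  shows "s ` orbit \<pi> x = orbit \<pi> (s x)"
proof -
  \<comment> \<open>\<open>s\<close> conjugates \<open>\<pi>\<close> into \<open>s \<circ> t = \<pi>\<inverse>\<close>, which has the same orbits\<close>
  have "inv \<pi> = s \<circ> t"
    by (rule inv_unique_comp) (simp_all add: assms(2-4) fun_eq_iff)
  have "s ` orbit \<pi> x = orbit (s \<circ> t) (s x)"
    by (rule orbit_inverse) (use permutation_self_in_orbit[OF assms(1)] in \<open>simp_all add: assms(2-4)\<close>)
  also have "\<dots> = orbit \<pi> (s x)"
    using orbit_inv_eq[OF assms(1)] \<open>inv \<pi> = s \<circ> t\<close> by simp
  finally show ?thesis .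
qed

lemma perfect_matching_loops_involution:
  assumes "\<And>v. v \<in> V \<Longrightarrow> \<sigma> v \<in> V" "\<And>v. v \<in> V \<Longrightarrow> \<sigma> (\<sigma> v) = v"
    and "\<And>v. v \<in> V \<Longrightarrow> \<sigma> v \<noteq> v \<Longrightarrow> adj v (\<sigma> v)"
    and "\<And>v. v \<in> V \<Longrightarrow> \<sigma> v = v \<Longrightarrow> loop v"
  shows "perfect_matching_loops V adj loop"
  unfolding perfect_matching_loops_def
proof (intro exI[of _ "{{v, \<sigma> v} | v. v \<in> V}"] conjI ballI)
  show "{{v, \<sigma> v} | v. v \<in> V} \<subseteq>
      {{a, b} | a b. a \<in> V \<and> b \<in> V \<and> a \<noteq> b \<and> adj a b} \<union> {{a} | a. a \<in> V \<and> loop a}"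
    using assms by fastforce
  fix v assume "v \<in> V"
  show "\<exists>!e. e \<in> {{v, \<sigma> v} | v. v \<in> V} \<and> v \<in> e"
  proof (rule ex1I[of _ "{v, \<sigma> v}"])
    fix e assume "e \<in> {{v, \<sigma> v} | v. v \<in> V} \<and> v \<in> e"
    then show "e = {v, \<sigma> v}"
      using assms(2) by auto
  qed (use \<open>v \<in> V\<close> in blast)
qed

lemma mutually_routable_of_two_matchings:
  assumes "matching E A" "matching E B"
    and "\<And>i. i \<in> C \<union> D \<Longrightarrow> swap_of B (swap_of A i) = \<pi> i"
    and "swap_of A ` C \<subseteq> D" "swap_of A ` D \<subseteq> C" "\<pi> ` C \<subseteq> C" "\<pi> ` D \<subseteq> D"
  shows "mutually_routable E \<pi> C D"
  unfolding mutually_routable_iff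
  by (rule routable_in_two_filter_edges[OF assms(1-3)])
    (use assms(4-7) in \<open>fastforce simp: insert_commute\<close>)+

lemma cycle_matching_of_routable_in_two:
  assumes "graph_on n E" "\<pi> permutes {..<n}" "routable_in_two E \<pi> {..<n}"
  shows "perfect_matching_loops (cycles_of n \<pi>) (mutually_routable E \<pi>) (indiv_routable E \<pi>)"
proof -
  obtain A B where A: "matching E A" and B: "matching E B"
    and AB: "\<forall>i\<in>{..<n}. swap_of B (swap_of A i) = \<pi> i"
    using assms(3) unfolding routable_in_two_def by blast
  define s where "s = swap_of A"
  define t where "t = swap_of B"
  have s: "s permutes {..<n}" and t: "t permutes {..<n}"
    unfolding s_def t_def using swap_of_permutes[OF assms(1)] A B by blast+
  have \<pi>_eq: "\<pi> = t \<circ> s"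
  proof
    fix x show "\<pi> x = (t \<circ> s) x"
      using AB permutes_not_in[OF s] permutes_not_in[OF t] permutes_not_in[OF assms(2)]
      by (cases "x < n") (auto simp: s_def t_def)
  qed
  have s_s: "s (s x) = x" and t_t: "t (t x) = x" for x
    unfolding s_def t_def by (rule swap_of_swap_of[OF A], rule swap_of_swap_of[OF B])
  have cycle_image: "s ` C \<in> cycles_of n \<pi>" if C: "C \<in> cycles_of n \<pi>" for C
  proof -
    obtain x where "x < n" "C = orbit \<pi> x"
      using C by (auto simp: cycles_of_eq_orbits[OF assms(2)])
    moreover have "s ` orbit \<pi> x = orbit \<pi> (s x)"
      by (rule involution_image_orbit[OF permutes_imp_permutation[OF finite_lessThan assms(2)]
            \<pi>_eq s_s t_t])
    moreover have "s x < n"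
      using permutes_in_image[OF s] \<open>x < n\<close> by simp
    ultimately show ?thesis
      by (simp add: cycles_of_eq_orbits[OF assms(2)])
  qed
  have closed: "\<pi> ` C \<subseteq> C" if "C \<in> cycles_of n \<pi>" for C
    using cycle_closed[OF assms(2) that] by blast
  have mutual: "mutually_routable E \<pi> C (s ` C)" if "C \<in> cycles_of n \<pi>" for C
    by (rule mutually_routable_of_two_matchings[OF A B])
      (use \<pi>_eq s_s closed[OF that] closed[OF cycle_image[OF that]] in \<open>auto simp: s_def t_def\<close>)
  have indiv: "indiv_routable E \<pi> C" if "C \<in> cycles_of n \<pi>" "s ` C = C" for C
    using mutual[OF that(1)] that(2) mutually_routable_self_imp_indiv_routable by simp
  show ?thesis
    by (rule perfect_matching_loops_involution[where \<sigma> = "\<lambda>C. s ` C"])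
      (use cycle_image mutual indiv s_s in \<open>auto simp: image_image\<close>)
qed

lemma routable_in_two_of_cycle_matching:
  assumes "\<pi> permutes {..<n}"
    and "perfect_matching_loops (cycles_of n \<pi>) (mutually_routable E \<pi>) (indiv_routable E \<pi>)"
  shows "routable_in_two E \<pi> {..<n}"
proof -
  obtain M where M: "M \<subseteq> {{a, b} | a b. a \<in> cycles_of n \<pi> \<and> b \<in> cycles_of n \<pi> \<and> a \<noteq> b
        \<and> mutually_routable E \<pi> a b} \<union> {{a} | a. a \<in> cycles_of n \<pi> \<and> indiv_routable E \<pi> a}"
    and unique: "\<forall>C\<in>cycles_of n \<pi>. \<exists>!e. e \<in> M \<and> C \<in> e"
    using assms(2) unfolding perfect_matching_loops_def by (elim exE conjE) (rule that)
  have M_cycles: "C \<in> cycles_of n \<pi>" if "e \<in> M" "C \<in> e" for e C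
    using subsetD[OF M that(1)] that(2) by auto
  have same_part: "e = e'" if part: "e \<in> M" "e' \<in> M" and i: "i \<in> \<Union>e" "i \<in> \<Union>e'" for e e' i
  proof -
    obtain C C' where C: "C \<in> e" "i \<in> C" and C': "C' \<in> e'" "i \<in> C'"
      using i by blast
    have "C = C'"
      using cycle_eq_orbit[OF assms(1) M_cycles[OF part(1) C(1)] C(2)]
        cycle_eq_orbit[OF assms(1) M_cycles[OF part(2) C'(1)] C'(2)] by simp
    then show ?thesis
      using unique M_cycles[OF part(1) C(1)] C(1) C'(1) part by blast
  qed
  have "disjoint (Union ` M)"
    unfolding pairwise_def disjnt_def using same_part by blast
  moreover have "routable_in_two {x\<in>E. x \<subseteq> S} \<pi> S" if S: "S \<in> Union ` M" for S
  proof -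
    obtain e where "e \<in> M" "S = \<Union>e"
      using S by blast
    then consider a b where "S = a \<union> b" "mutually_routable E \<pi> a b"
      | a where "S = a" "indiv_routable E \<pi> a"
      using subsetD[OF M \<open>e \<in> M\<close>] by auto
    then show ?thesis
    proof cases
      case 1
      then show ?thesis
        unfolding mutually_routable_iff by (elim routable_in_two_mono) auto
    next
      case 2
      then show ?thesis
        unfolding indiv_routable_iff by simp
    qed
  qed
  ultimately have "routable_in_two E \<pi> (\<Union>(Union ` M))"
    by (rule routable_in_two_disjoint_Union)
  moreover have "{..<n} \<subseteq> \<Union>(Union ` M)"
  proof
    fix i assume "i \<in> {..<n}"
    then obtain e where "e \<in> M" "orbit \<pi> i \<in> e"
      using unique orbit_in_cycles_of[OF assms(1)] by blast
    moreover have "i \<in> orbit \<pi> i"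
      by (rule permutation_self_in_orbit[OF permutes_imp_permutation[OF finite_lessThan assms(1)]])
    ultimately show "i \<in> \<Union>(Union ` M)"
      by blast
  qed
  ultimately show ?thesis
    by (rule routable_in_two_mono[OF _ subset_refl])
qed

theorem lemma2:
  fixes n :: nat and E :: "nat set set" and \<pi> :: "nat \<Rightarrow> nat"
  assumes "graph_on n E"
    and "connected_graph n E"
    and "\<pi> permutes {..<n}"
    and "rt n E \<pi> > 1"
  shows "rt n E \<pi> = 2 \<longleftrightarrow>
           perfect_matching_loops (cycles_of n \<pi>) (mutually_routable E \<pi>) (indiv_routable E \<pi>)"
proof -
  have "\<exists>ms. (\<forall>M\<in>set ms. matching E M) \<and> (\<forall>i<n. route ms i = \<pi> i)"
    using permutes_routable[OF assms(1-3)] by auto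
  moreover have "rt n E \<pi> = 2 \<longleftrightarrow> rt n E \<pi> \<le> 2"
    using assms(4) by linarith
  ultimately have "rt n E \<pi> = 2 \<longleftrightarrow> routable_in_two E \<pi> {..<n}"
    using rt_le_2_iff by blast
  also have "\<dots> \<longleftrightarrow> perfect_matching_loops (cycles_of n \<pi>) (mutually_routable E \<pi>) (indiv_routable E \<pi>)"
    using cycle_matching_of_routable_in_two[OF assms(1,3)]
      routable_in_two_of_cycle_matching[OF assms(3)] by blast
  finally show ?thesis .
qed

end
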